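(* Let $(R,B)$ be an EIC problem with problem graph $G=(V,E)$ and sender neighborhoods $N_1,\dots,N_n$, and let $\mathscr C=\{V(C): C \text{ is a maximal clique in } G|_{N_i}\text{ for some } i\}$. For every neighborhood partition $(\tilde N_1,\dots,\tilde N_n)$ there exists a cover $\mathcal C$ of $V$ by elements of $\mathscr C$ such that $$\sum_{C_j\in\mathcal C}\chi\big(\overline{G|_{C_j}}\big)=\sum_{i=1}^n\chi\big(\overline{G|_{\tilde N_i}}\big).$$
   Context: An EIC problem is a pair $(R,B)$ of matrices in $\mathbb{F}_2^{n\times m}$ with disjoint supports (node $u$ needs block $a$ iff $R_{ua}=1$, has it iff $B_{ua}=1$). $P=\{(u,a):R_{ua}=1\}$. The problem graph $G=(V,E)$ has vertices $V=\{v_{(u,a)}:(u,a)\in P\}$ and a directed edge from $v_{(u,a)}$ to $v_{(w,b)}$ iff $B_{ub}=1$ or $a=b$; $G|_S$ is the subgraph induced on $S$. Sender neighborhood of node $k$: $N_k=\{v_{(w,b)}\in V:B_{kb}=1\}$. A neighborhood partition is a tuple $(\tilde N_1,\dots,\tilde N_n)$ with $\tilde N_i\subseteq N_i$, pairwise disjoint, union $V$. For a directed graph $H$ (loops disregarded): $\overline H$ has edge $(x,y)$, $x\ne y$, iff $(x,y)\notin E(H)$; a clique is a vertex set in which every ordered pair of distinct vertices is an edge (maximal if not properly contained in another clique); an independent set contains no edge in either direction; $\chi(H)$ is the minimum number of independent sets partitioning the vertex set ($0$ if empty). A cover of $V$ by elements of $\mathscr C$ is a collection of members of $\mathscr C$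 whose union is $V$. *)

theory Defs
  imports Main "HOL-Library.Disjoint_Sets"
begin

text \<open>Directed graphs are represented as pairs (vertex set, edge relation).
  Loops are disregarded throughout (all notions only look at pairs of distinct vertices).\<close>

type_synonym 'a digraph = "'a set \<times> ('a \<times> 'a) set"

definition induced :: "'a digraph \<Rightarrow> 'a set \<Rightarrow> 'a digraph" where
  "induced H S = (S, {(x,y). (x,y) \<in> snd H \<and> x \<in> S \<and> y \<in> S})"

definition complement :: "'a digraph \<Rightarrow> 'a digraph" where
  "complement H = (fst H, {(x,y). x \<in> fst H \<and> y \<in> fst H \<and> x \<noteq> y \<and> (x,y) \<notin> snd H})"

definition is_clique :: "'a digraph \<Rightarrow> 'a set \<Rightarrow> bool" where
  "is_clique H C \<longleftrightarrow> C \<subseteq> fst H \<and> (\<forall>x\<in>C. \<forall>y\<in>C. x \<noteq> y \<longrightarrow> (x,y) \<in> snd H)"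

definition is_maximal_clique :: "'a digraph \<Rightarrow> 'a set \<Rightarrow> bool" where
  "is_maximal_clique H C \<longleftrightarrow> is_clique H C \<and> \<not> (\<exists>D. is_clique H D \<and> C \<subset> D)"

definition is_independent :: "'a digraph \<Rightarrow> 'a set \<Rightarrow> bool" where
  "is_independent H I \<longleftrightarrow> I \<subseteq> fst H \<and> (\<forall>x\<in>I. \<forall>y\<in>I. x \<noteq> y \<longrightarrow> (x,y) \<notin> snd H)"

text \<open>Chromatic number: least number of independent sets partitioning the vertex set
  (0 for the empty graph).\<close>
definition chi :: "'a digraph \<Rightarrow> nat" where
  "chi H = (LEAST k. \<exists>P. partition_on (fst H) P \<and> finite P \<and> card P = k \<and>
                          (\<forall>I\<in>P. is_independent H I))"

text \<open>EIC problem: n nodes (indexed 0..<n), m blocks (indexed 0..<m);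
  R u a: node u needs block a; B u a: node u has block a (entries of F_2 matrices as bool).\<close>

definition eic_problem :: "nat \<Rightarrow> nat \<Rightarrow> (nat \<Rightarrow> nat \<Rightarrow> bool) \<Rightarrow> (nat \<Rightarrow> nat \<Rightarrow> bool) \<Rightarrow> bool" where
  "eic_problem n m R B \<longleftrightarrow> (\<forall>u<n. \<forall>a<m. \<not> (R u a \<and> B u a))"

definition problem_vertices :: "nat \<Rightarrow> nat \<Rightarrow> (nat \<Rightarrow> nat \<Rightarrow> bool) \<Rightarrow> (nat \<times> nat) set" where
  "problem_vertices n m R = {(u,a). u < n \<and> a < m \<and> R u a}"

definition problem_graph :: "nat \<Rightarrow> nat \<Rightarrow> (nat \<Rightarrow> nat \<Rightarrow> bool) \<Rightarrow> (nat \<Rightarrow> nat \<Rightarrow> bool) \<Rightarrow> (nat \<times> nat) digraph" where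
  "problem_graph n m R B =
     (problem_vertices n m R,
      {((u,a),(w,b)). (u,a) \<in> problem_vertices n m R \<and> (w,b) \<in> problem_vertices n m R \<and>
                      (B u b \<or> a = b)})"

definition sender_nbhd :: "nat \<Rightarrow> nat \<Rightarrow> (nat \<Rightarrow> nat \<Rightarrow> bool) \<Rightarrow> (nat \<Rightarrow> nat \<Rightarrow> bool) \<Rightarrow> nat \<Rightarrow> (nat \<times> nat) set" where
  "sender_nbhd n m R B k = {(w,b) \<in> problem_vertices n m R. B k b}"

definition nbhd_partition :: "nat \<Rightarrow> nat \<Rightarrow> (nat \<Rightarrow> nat \<Rightarrow> bool) \<Rightarrow> (nat \<Rightarrow> nat \<Rightarrow> bool) \<Rightarrow> (nat \<Rightarrow> (nat \<times> nat) set) \<Rightarrow> bool" where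
  "nbhd_partition n m R B Nt \<longleftrightarrow>
     (\<forall>i<n. Nt i \<subseteq> sender_nbhd n m R B i) \<and>
     (\<forall>i<n. \<forall>j<n. i \<noteq> j \<longrightarrow> Nt i \<inter> Nt j = {}) \<and>
     (\<Union>i<n. Nt i) = problem_vertices n m R"

definition max_clique_family :: "nat \<Rightarrow> nat \<Rightarrow> (nat \<Rightarrow> nat \<Rightarrow> bool) \<Rightarrow> (nat \<Rightarrow> nat \<Rightarrow> bool) \<Rightarrow> (nat \<times> nat) set set" where
  "max_clique_family n m R B =
     {C. \<exists>i<n. is_maximal_clique (induced (problem_graph n m R B) (sender_nbhd n m R B i)) C}"

end

theory Submission
  imports Defs
begin

text \<open>An optimal colouring of the complement of G|S partitions S into cliques of G. If
  S lies in a sender neighborhood N i, every such clique extends to a maximal clique of G|N i,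
  and the complement of a nonempty clique has chromatic number 1; so these maximal cliques
  cover S and their chromatic numbers add up to that of the complement of G|S. Concatenating
  these families over the parts of a neighborhood partition covers V with the required sum.\<close>

lemma sum_list_concat_map_upt:
  "(\<Sum>x\<leftarrow>concat (map L [0..<n]). f x) = (\<Sum>i<n. \<Sum>x\<leftarrow>L i. (f x :: 'b :: comm_monoid_add))"
  by (induction n) (auto simp: add.commute)

lemma is_independent_complement_iff: "is_independent (complement H) I \<longleftrightarrow> is_clique H I"
  by (auto simp: is_independent_def is_clique_def complement_def)

lemma is_clique_induced_iff:
  "is_clique (induced H S) C \<longleftrightarrow> C \<subseteq> S \<and> (\<forall>x\<in>C. \<forall>y\<in>C. x \<noteq> y \<longrightarrow> (x, y) \<in> snd H)"
  by (auto simp: is_clique_def induced_def)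

lemma chi_attained:
  assumes "finite (fst H)"
  shows "\<exists>P. partition_on (fst H) P \<and> finite P \<and> card P = chi H \<and> (\<forall>I\<in>P. is_independent H I)"
proof -
  let ?singletons = "(\<lambda>x. {x}) ` fst H"
  have "\<exists>P. partition_on (fst H) P \<and> finite P \<and> card P = card ?singletons
        \<and> (\<forall>I\<in>P. is_independent H I)"
    using assms by (intro exI[of _ ?singletons]) (auto simp: partition_on_singletons is_independent_def)
  then show ?thesis
    unfolding chi_def by (rule LeastI_ex[OF exI])
qed

lemma chi_eq_1:
  assumes "fst H \<noteq> {}" and "is_independent H (fst H)"
  shows "chi H = 1"
  unfolding chi_def
proof (rule Least_equality)
  show "\<exists>P. partition_on (fst H) P \<and> finite P \<and> card P = 1 \<and> (\<forall>I\<in>P. is_independent H I)"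
    using assms by (intro exI[of _ "{fst H}"]) (auto simp: partition_on_space)
next
  fix k assume "\<exists>P. partition_on (fst H) P \<and> finite P \<and> card P = k \<and> (\<forall>I\<in>P. is_independent H I)"
  then obtain P where "partition_on (fst H) P" "finite P" "card P = k" by blast
  moreover from this(1) assms(1) have "P \<noteq> {}" by (auto simp: partition_on_def)
  ultimately show "1 \<le> k" by (metis card_0_eq less_one linorder_not_le)
qed

lemma chi_complement_clique:
  assumes "C \<noteq> {}" and "is_clique (induced H C) C"
  shows "chi (complement (induced H C)) = 1"
proof -
  have "fst (complement (induced H C)) = C" by (simp add: complement_def induced_def)
  with assms show ?thesis by (intro chi_eq_1) (simp_all add: is_independent_complement_iff)
qed

lemma maximal_clique_induced_subset: "is_maximal_clique (induced H S) C \<Longrightarrow> C \<subseteq> S"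
  by (simp add: is_maximal_clique_def is_clique_def induced_def)

lemma maximal_clique_extends:
  assumes "finite (fst H)" and "is_clique H Q"
  shows "\<exists>C. is_maximal_clique H C \<and> Q \<subseteq> C"
  using assms(2)
proof (induction "card (fst H - Q)" arbitrary: Q rule: less_induct)
  case less
  show ?case
  proof (cases "is_maximal_clique H Q")
    case False
    then obtain D where D: "is_clique H D" "Q \<subset> D"
      using less.prems by (auto simp: is_maximal_clique_def)
    then have "card (fst H - D) < card (fst H - Q)"
      using assms(1) by (intro psubset_card_mono) (auto simp: is_clique_def)
    from less.hyps[OF this D(1)] D(2) show ?thesis by blast
  qed blast
qed

lemma maximal_clique_cover_chi:
  assumes "finite N" and "S \<subseteq> N"
  shows "\<exists>L. set L \<subseteq> {C. is_maximal_clique (induced G N) C} \<and> S \<subseteq> \<Union> (set L) \<and>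
             (\<Sum>C\<leftarrow>L. chi (complement (induced G C))) = chi (complement (induced G S))"
proof -
  have "finite S" "fst (complement (induced G S)) = S"
    using assms finite_subset by (auto simp: complement_def induced_def)
  then obtain P where P: "partition_on S P" "finite P" "card P = chi (complement (induced G S))"
    and P_cliques: "\<And>I. I \<in> P \<Longrightarrow> is_clique (induced G S) I"
    using chi_attained[of "complement (induced G S)"] by (auto simp: is_independent_complement_iff)
  have "is_clique (induced G N) I" if "I \<in> P" for I
    using P_cliques[OF that] assms(2) by (auto simp: is_clique_induced_iff)
  then have "\<forall>I\<in>P. \<exists>C. is_maximal_clique (induced G N) C \<and> I \<subseteq> C"
    using maximal_clique_extends[of "induced G N"] assms(1) by (simp add: induced_def)
  then obtain f where f: "\<And>I. I \<in> P \<Longrightarrow> is_maximal_clique (induced G N) (f I) \<and> I \<subseteq> f I"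
    by metis
  obtain xs where xs: "set xs = P" "distinct xs"
    using finite_distinct_list[OF P(2)] by blast
  have chi_f: "chi (complement (induced G (f I))) = 1" if "I \<in> P" for I
  proof (rule chi_complement_clique)
    show "f I \<noteq> {}" using f[OF that] P(1) that by (auto simp: partition_on_def)
    show "is_clique (induced G (f I)) (f I)"
      using f[OF that] by (simp add: is_maximal_clique_def is_clique_induced_iff)
  qed
  have "(\<Sum>C\<leftarrow>map f xs. chi (complement (induced G C))) = (\<Sum>I\<leftarrow>xs. 1)"
    unfolding map_map comp_def using chi_f xs(1)
    by (intro arg_cong[where f = sum_list] map_cong) auto
  also have "\<dots> = card P"
    using distinct_card[OF xs(2)] xs(1) by (simp add: sum_list_triv)
  finally have "(\<Sum>C\<leftarrow>map f xs. chi (complement (induced G C))) = chi (complement (induced G S))"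
    using P(3) by simp
  moreover have "set (map f xs) \<subseteq> {C. is_maximal_clique (induced G N) C}"
    using f xs(1) by auto
  moreover have "S \<subseteq> \<Union> (set (map f xs))"
    using f xs(1) P(1) by (auto simp: partition_on_def)
  ultimately show ?thesis by blast
qed

lemma finite_problem_vertices: "finite (problem_vertices n m R)"
  by (rule finite_subset[of _ "{..<n} \<times> {..<m}"]) (auto simp: problem_vertices_def)

lemma sender_nbhd_subset: "sender_nbhd n m R B i \<subseteq> problem_vertices n m R"
  by (auto simp: sender_nbhd_def)

lemma max_clique_family_subset: "C \<in> max_clique_family n m R B \<Longrightarrow> C \<subseteq> problem_vertices n m R"
  unfolding max_clique_family_def
  by (blast dest: maximal_clique_induced_subset intro: sender_nbhd_subset[THEN subsetD])

lemma max_clique_family_cover_chi: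
  assumes "i < n" and "S \<subseteq> sender_nbhd n m R B i"
  shows "\<exists>L. set L \<subseteq> max_clique_family n m R B \<and> S \<subseteq> \<Union> (set L) \<and>
             (\<Sum>C\<leftarrow>L. chi (complement (induced (problem_graph n m R B) C))) =
             chi (complement (induced (problem_graph n m R B) S))"
proof -
  have "finite (sender_nbhd n m R B i)"
    using finite_problem_vertices sender_nbhd_subset by (rule finite_subset[rotated])
  then obtain L where
    "set L \<subseteq> {C. is_maximal_clique (induced (problem_graph n m R B) (sender_nbhd n m R B i)) C}"
    "S \<subseteq> \<Union> (set L)"
    "(\<Sum>C\<leftarrow>L. chi (complement (induced (problem_graph n m R B) C))) =
     chi (complement (induced (problem_graph n m R B) S))"
    using maximal_clique_cover_chi[OF _ assms(2)] by metis
  with assms(1) show ?thesis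
    unfolding max_clique_family_def by blast
qed

theorem lemma6:
  fixes n m :: nat and R B :: "nat \<Rightarrow> nat \<Rightarrow> bool" and Nt :: "nat \<Rightarrow> (nat \<times> nat) set"
  assumes "eic_problem n m R B"
    and "nbhd_partition n m R B Nt"
  shows "\<exists>Cs :: (nat \<times> nat) set list.
           set Cs \<subseteq> max_clique_family n m R B \<and>
           \<Union> (set Cs) = problem_vertices n m R \<and>
           (\<Sum>C\<leftarrow>Cs. chi (complement (induced (problem_graph n m R B) C))) =
           (\<Sum>i<n. chi (complement (induced (problem_graph n m R B) (Nt i))))"
proof -
  let ?c = "\<lambda>C. chi (complement (induced (problem_graph n m R B) C))"
  have "\<forall>i<n. \<exists>L. set L \<subseteq> max_clique_family n m R B \<and> Nt i \<subseteq> \<Union> (set L) \<and>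
      (\<Sum>C\<leftarrow>L. ?c C) = ?c (Nt i)"
    using assms(2) by (auto simp: nbhd_partition_def intro!: max_clique_family_cover_chi)
  then obtain L where L: "\<And>i. i < n \<Longrightarrow> set (L i) \<subseteq> max_clique_family n m R B \<and>
      Nt i \<subseteq> \<Union> (set (L i)) \<and> (\<Sum>C\<leftarrow>L i. ?c C) = ?c (Nt i)"
    by metis
  then have L_family: "\<And>i. i < n \<Longrightarrow> set (L i) \<subseteq> max_clique_family n m R B"
    and L_cover: "\<And>i. i < n \<Longrightarrow> Nt i \<subseteq> \<Union> (set (L i))"
    and L_sum: "\<And>i. i < n \<Longrightarrow> (\<Sum>C\<leftarrow>L i. ?c C) = ?c (Nt i)"
    by auto
  define Cs where "Cs = concat (map L [0..<n])"
  have set_Cs: "set Cs = (\<Union>i<n. set (L i))"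
    by (auto simp: Cs_def)
  have family: "set Cs \<subseteq> max_clique_family n m R B"
    unfolding set_Cs by (rule UN_least) (simp add: L_family)
  have "problem_vertices n m R = (\<Union>i<n. Nt i)"
    using assms(2) by (simp add: nbhd_partition_def)
  also have "\<dots> \<subseteq> \<Union> (set Cs)"
    unfolding set_Cs using L_cover by blast
  finally have "\<Union> (set Cs) = problem_vertices n m R"
    using family max_clique_family_subset by blast
  moreover have "(\<Sum>C\<leftarrow>Cs. ?c C) = (\<Sum>i<n. ?c (Nt i))"
    unfolding Cs_def sum_list_concat_map_upt using L_sum by (intro sum.cong) auto
  ultimately show ?thesis
    using family by blast
qed

end
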